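(* On torsionfree bornological \(V\)-modules, the assignment \(M\mapsto M'\) is right adjoint to the inclusion of the full subcategory of nuclear, torsionfree bornological \(V\)-modules into the category of torsionfree bornological \(V\)-modules (with bounded \(V\)-linear maps as morphisms). That is, for every torsionfree bornological \(V\)-module \(N\), \(N'\) is a nuclear torsionfree bornological \(V\)-module, and for every nuclear torsionfree bornological \(V\)-module \(M\), a \(V\)-linear map \(M\to N\) is bounded if and only if it is bounded as a map \(M\to N'\).
   Context: Let \(V\) be a complete discrete valuation ring with uniformiser \(\pi\) and fraction field \(F\). A bornology on a set is a collection of subsets (called bounded) containing all finite subsets and closed under finite unions and under taking subsets. A bornological \(V\)-module is a \(V\)-module with a bornology such that every bounded subset is contained in a bounded \(V\)-submodule; a \(V\)-linear map is bounded if it maps bounded subsets to bounded subsets. \(M\) is torsionfree if it is torsionfree as a \(V\)-module and \(\pi^{-1}S=\{x:\pi x\in S\}\) is bounded for every bounded \(S\). A subset \(S\subseteq M\) is compactoid if there is a bounded \(V\)-submodule \(T\subseteq M\) with \(S\subseteq T\) such that for every \(n\in\mathbb N\) there is a finite set \(F_n\subseteq T\) with \(S\subseteq VF_n+\pi^nT\). \(M'\) denotes \(M\) with the bornology of compactoid subsets; \(M\) is nuclear if every bounded subset of \(M\) is compactoid. *)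

theory Defs
  imports Complex_Main
begin

definition dvr_uniformiser :: "'v::idom \<Rightarrow> bool" where
  "dvr_uniformiser \<pi> \<longleftrightarrow> \<pi> \<noteq> 0 \<and> \<not> \<pi> dvd 1 \<and>
     (\<forall>x. x \<noteq> 0 \<longrightarrow> (\<exists>u n. u dvd 1 \<and> x = u * \<pi> ^ n))"

definition pi_adically_complete :: "'v::idom \<Rightarrow> bool" where
  "pi_adically_complete \<pi> \<longleftrightarrow>
     (\<forall>x :: nat \<Rightarrow> 'v. (\<forall>n. \<pi> ^ n dvd x (Suc n) - x n) \<longrightarrow>
        (\<exists>y. \<forall>n. \<pi> ^ n dvd y - x n))"

definition complete_dvr :: "'v::idom \<Rightarrow> bool" where
  "complete_dvr \<pi> \<longleftrightarrow> dvr_uniformiser \<pi> \<and> pi_adically_complete \<pi>"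

definition submodule :: "('v::comm_ring_1 \<Rightarrow> 'm::ab_group_add \<Rightarrow> 'm) \<Rightarrow> 'm set \<Rightarrow> bool" where
  "submodule scale S \<longleftrightarrow> 0 \<in> S \<and> (\<forall>x\<in>S. \<forall>y\<in>S. x + y \<in> S) \<and> (\<forall>c. \<forall>x\<in>S. scale c x \<in> S)"

definition gen_submodule :: "('v::comm_ring_1 \<Rightarrow> 'm::ab_group_add \<Rightarrow> 'm) \<Rightarrow> 'm set \<Rightarrow> 'm set" where
  "gen_submodule scale F = {(\<Sum>a\<in>t. scale (r a) a) | t r. finite t \<and> t \<subseteq> F}"

definition bornology :: "'m set set \<Rightarrow> bool" where
  "bornology B \<longleftrightarrow> (\<forall>S. finite S \<longrightarrow> S \<in> B) \<and>
     (\<forall>S T. S \<in> B \<longrightarrow> T \<in> B \<longrightarrow> S \<union> T \<in> B) \<and>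
     (\<forall>S T. S \<in> B \<longrightarrow> T \<subseteq> S \<longrightarrow> T \<in> B)"

definition born_module :: "('v::comm_ring_1 \<Rightarrow> 'm::ab_group_add \<Rightarrow> 'm) \<Rightarrow> 'm set set \<Rightarrow> bool" where
  "born_module scale B \<longleftrightarrow> module scale \<and> bornology B \<and>
     (\<forall>S\<in>B. \<exists>T\<in>B. S \<subseteq> T \<and> submodule scale T)"

definition bounded_map :: "'m set set \<Rightarrow> 'n set set \<Rightarrow> ('m \<Rightarrow> 'n) \<Rightarrow> bool" where
  "bounded_map B B' f \<longleftrightarrow> (\<forall>S\<in>B. f ` S \<in> B')"

definition torsionfree_born ::
    "('v::comm_ring_1 \<Rightarrow> 'm::ab_group_add \<Rightarrow> 'm) \<Rightarrow> 'v \<Rightarrow> 'm set set \<Rightarrow> bool" where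
  "torsionfree_born scale \<pi> B \<longleftrightarrow>
     (\<forall>a x. a \<noteq> 0 \<longrightarrow> scale a x = 0 \<longrightarrow> x = 0) \<and>
     (\<forall>S\<in>B. {x. scale \<pi> x \<in> S} \<in> B)"

definition compactoid ::
    "('v::comm_ring_1 \<Rightarrow> 'm::ab_group_add \<Rightarrow> 'm) \<Rightarrow> 'v \<Rightarrow> 'm set set \<Rightarrow> 'm set \<Rightarrow> bool" where
  "compactoid scale \<pi> B S \<longleftrightarrow>
     (\<exists>T. T \<in> B \<and> submodule scale T \<and> S \<subseteq> T \<and>
        (\<forall>n::nat. \<exists>F. finite F \<and> F \<subseteq> T \<and>
           S \<subseteq> {x + y | x y. x \<in> gen_submodule scale F \<and> y \<in> scale (\<pi> ^ n) ` T}))"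

definition compactoid_born ::
    "('v::comm_ring_1 \<Rightarrow> 'm::ab_group_add \<Rightarrow> 'm) \<Rightarrow> 'v \<Rightarrow> 'm set set \<Rightarrow> 'm set set" where
  "compactoid_born scale \<pi> B = {S. compactoid scale \<pi> B S}"

definition nuclear ::
    "('v::comm_ring_1 \<Rightarrow> 'm::ab_group_add \<Rightarrow> 'm) \<Rightarrow> 'v \<Rightarrow> 'm set set \<Rightarrow> bool" where
  "nuclear scale \<pi> B \<longleftrightarrow> (\<forall>S\<in>B. compactoid scale \<pi> B S)"

end

(* Over a discrete valuation ring every ideal is principal, so a submodule H meets the
   span of a finite set F in a finitely generated submodule; in a torsionfree module the
   same holds for {y \<in> W. c y \<in> span F}. Hence the finite sets approximating a compactoid
   set S modulo \<pi>^n T can be chosen inside any submodule containing S. For S compactoid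
   in the bounded submodule T this gives the two substantial facts: \<pi>^-1 S is compactoid
   in \<pi>^-1 T, and S is compactoid in a submodule T' \<subseteq> T which is itself compactoid
   in T, so N' is nuclear. The adjunction is formal: a bounded linear map sends a set
   compactoid in T to one compactoid in f T, and compactoid sets are bounded. *)
theory Submission
  imports Defs "HOL-Library.Set_Algebras"
begin

section \<open>Finitely generated submodules over a discrete valuation ring\<close>

lemma dvr_uniformiser_nonzero: "dvr_uniformiser \<pi> \<Longrightarrow> \<pi> \<noteq> 0"
  unfolding dvr_uniformiser_def by simp

lemma dvr_uniformiser_ex_dvd_all:
  fixes \<pi> :: "'v::idom" and I :: "'v set"
  assumes "dvr_uniformiser \<pi>" and "I \<noteq> {}"
  shows "\<exists>d\<in>I. \<forall>c\<in>I. d dvd c"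
proof (cases "I \<subseteq> {0}")
  case True
  with assms(2) show ?thesis by auto
next
  case False
  then obtain c0 where c0: "c0 \<in> I" "c0 \<noteq> 0" by auto
  have unit_power: "\<And>x. x \<noteq> 0 \<Longrightarrow> \<exists>u n. u dvd 1 \<and> x = u * \<pi> ^ n"
    using assms(1) unfolding dvr_uniformiser_def by blast
  define P where "P n \<longleftrightarrow> (\<exists>u. u dvd 1 \<and> u * \<pi> ^ n \<in> I)" for n
  have "\<exists>n. P n" using unit_power[OF c0(2)] c0(1) unfolding P_def by metis
  then have "P (LEAST n. P n)" by (rule LeastI_ex)
  then obtain u where u: "u dvd 1" "u * \<pi> ^ (LEAST n. P n) \<in> I"
    unfolding P_def by blast
  show ?thesis
  proof (intro bexI[OF _ u(2)] ballI)
    fix c assume c: "c \<in> I"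
    show "u * \<pi> ^ (LEAST n. P n) dvd c"
    proof (cases "c = 0")
      case False
      then obtain w k where wk: "w dvd 1" "c = w * \<pi> ^ k" using unit_power by blast
      then have "P k" unfolding P_def using c by blast
      then have "\<pi> ^ (LEAST n. P n) dvd \<pi> ^ k" by (intro le_imp_power_dvd Least_le)
      moreover have "u dvd w" using u(1) by (meson dvd_trans one_dvd)
      ultimately show ?thesis using wk(2) by (simp add: mult_dvd_mono)
    qed simp
  qed
qed

lemma subspace_Int_span_finitely_generated:
  fixes \<pi> :: "'v::idom" and scale :: "'v \<Rightarrow> 'm::ab_group_add \<Rightarrow> 'm"
  assumes M: "module scale" and V: "dvr_uniformiser \<pi>"
    and H: "module.subspace scale H" and F: "finite F"
  shows "\<exists>G. finite G \<and> G \<subseteq> H \<and> module.span scale G = H \<inter> module.span scale F"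
  using F
proof (induction F rule: finite_induct)
  case empty
  interpret module scale by (rule M)
  show ?case using subspace_0[OF H] by (intro exI[of _ "{}"]) auto
next
  case (insert a F)
  interpret module scale by (rule M)
  obtain G where G: "finite G" "G \<subseteq> H" "span G = H \<inter> span F" using insert.IH by blast
  txt \<open>The coefficients of a in H \<inter> span (insert a F) modulo span F form an ideal;
    an element h0 realising its generator d, together with G, generates the intersection.\<close>
  define I where "I = {c. \<exists>h\<in>H \<inter> span (insert a F). h - scale c a \<in> span F}"
  have "0 \<in> I" unfolding I_def using subspace_0[OF H] span_zero by force
  then obtain d where d: "d \<in> I" "\<And>c. c \<in> I \<Longrightarrow> d dvd c"
    using dvr_uniformiser_ex_dvd_all[OF V, of I] by blast
  then obtain h0 where h0: "h0 \<in> H" "h0 \<in> span (insert a F)" "h0 - scale d a \<in> span F"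
    unfolding I_def by blast
  have "span (insert h0 G) = H \<inter> span (insert a F)"
  proof
    have "G \<subseteq> span (insert a F)" using G(3) span_superset span_mono[of F "insert a F"] by blast
    then show "span (insert h0 G) \<subseteq> H \<inter> span (insert a F)"
      using G(2) h0(1,2) by (intro span_minimal subspace_inter H subspace_span) auto
  next
    show "H \<inter> span (insert a F) \<subseteq> span (insert h0 G)"
    proof
      fix h assume h: "h \<in> H \<inter> span (insert a F)"
      then obtain c where c: "h - scale c a \<in> span F" using span_breakdown_eq by blast
      then have "c \<in> I" unfolding I_def using h by blast
      then obtain e where e: "c = d * e" using d(2) by (blast elim: dvdE)
      have eq: "h - scale e h0 = (h - scale c a) - scale e (h0 - scale d a)"
        by (simp add: e scale_right_diff_distrib mult.commute[of d e])
      have "h - scale e h0 \<in> span F"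
        unfolding eq by (intro span_diff span_scale c h0(3))
      moreover have "h - scale e h0 \<in> H"
        using h h0(1) by (intro subspace_diff[OF H] subspace_scale[OF H]) auto
      ultimately have "h - scale e h0 \<in> span G" using G(3) by blast
      then show "h \<in> span (insert h0 G)" using span_breakdown_eq by blast
    qed
  qed
  then show ?case using G(1,2) h0(1) by (intro exI[of _ "insert h0 G"]) auto
qed

lemma scale_preimage_finitely_generated:
  fixes \<pi> :: "'v::idom" and scale :: "'v \<Rightarrow> 'm::ab_group_add \<Rightarrow> 'm"
  assumes M: "module scale" and V: "dvr_uniformiser \<pi>" and inj: "inj (scale c)"
    and W: "module.subspace scale W" and F: "finite F"
  shows "\<exists>D. finite D \<and> D \<subseteq> W \<and>
           {y \<in> W. scale c y \<in> module.span scale F} \<subseteq> module.span scale D"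
proof -
  interpret module scale by (rule M)
  have hom: "module_hom scale scale (scale c)" by simp
  obtain G where G: "finite G" "G \<subseteq> scale c ` W" "span G = scale c ` W \<inter> span F"
    using subspace_Int_span_finitely_generated[OF M V module_hom.subspace_image[OF hom W] F]
    by blast
  obtain D where D: "D \<subseteq> W" "finite D" "G = scale c ` D"
    using finite_subset_image[OF G(1,2)] by blast
  have "y \<in> span D" if "y \<in> W" "scale c y \<in> span F" for y
  proof -
    have "scale c y \<in> scale c ` span D"
      using that G(3) D(3) module_hom.span_image[OF hom] by auto
    then show ?thesis using inj by (auto dest: injD)
  qed
  then show ?thesis using D by blast
qed

section \<open>Compactoid subsets relative to a submodule\<close>

definition compactoid_in ::
    "('v::comm_ring_1 \<Rightarrow> 'm::ab_group_add \<Rightarrow> 'm) \<Rightarrow> 'v \<Rightarrow> 'm set \<Rightarrow> 'm set \<Rightarrow> bool" where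
  "compactoid_in scale \<pi> T S \<longleftrightarrow>
     (\<forall>n. \<exists>F. finite F \<and> F \<subseteq> T \<and> S \<subseteq> module.span scale F + scale (\<pi> ^ n) ` T)"

context module
begin
lemma subspace_set_plus:
  assumes A: "subspace A" and B: "subspace B"
  shows "subspace (A + B)"
proof (rule subspaceI)
  show "0 \<in> A + B" using subspace_0[OF A] subspace_0[OF B] set_plus_intro by fastforce
next
  fix x y assume "x \<in> A + B" "y \<in> A + B"
  then obtain a b a' b' where "x = a + b" "y = a' + b'" "a \<in> A" "b \<in> B" "a' \<in> A" "b' \<in> B"
    by (auto elim!: set_plus_elim)
  then have "x + y = (a + a') + (b + b')" "a + a' \<in> A" "b + b' \<in> B"
    by (simp_all add: ac_simps subspace_add[OF A] subspace_add[OF B])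
  then show "x + y \<in> A + B" by auto
next
  fix c x assume "x \<in> A + B"
  then obtain a b where "x = a + b" "a \<in> A" "b \<in> B" by (auto elim!: set_plus_elim)
  then have "scale c x = scale c a + scale c b" "scale c a \<in> A" "scale c b \<in> B"
    by (simp_all add: scale_right_distrib subspace_scale[OF A] subspace_scale[OF B])
  then show "scale c x \<in> A + B" by auto
qed

lemma subspace_scale_image: "subspace T \<Longrightarrow> subspace (scale c ` T)"
  using module_hom.subspace_image[OF module_hom_scale_self] by blast

lemma compactoid_in_imp_subset:
  assumes "subspace T" "compactoid_in scale \<pi> T S"
  shows "S \<subseteq> T"
proof -
  obtain F where F: "F \<subseteq> T" "S \<subseteq> span F + scale (\<pi> ^ 0) ` T"
    using assms(2) unfolding compactoid_in_def by blast
  have "span F + scale (\<pi> ^ 0) ` T \<subseteq> T"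
  proof
    fix x assume "x \<in> span F + scale (\<pi> ^ 0) ` T"
    then obtain g t where "g \<in> span F" "t \<in> T" "x = g + scale (\<pi> ^ 0) t"
      by (blast elim: set_plus_elim)
    moreover have "span F \<subseteq> T" using span_minimal[OF F(1) assms(1)] .
    ultimately show "x \<in> T" using subspace_add[OF assms(1)] by auto
  qed
  then show ?thesis using F(2) by blast
qed

lemma compactoid_in_finite:
  assumes "subspace T" "finite S" "S \<subseteq> T"
  shows "compactoid_in scale \<pi> T S"
proof -
  have "S \<subseteq> span S + scale (\<pi> ^ n) ` T" for n
  proof
    fix s assume "s \<in> S"
    then have "s + scale (\<pi> ^ n) 0 \<in> span S + scale (\<pi> ^ n) ` T"
      using subspace_0[OF assms(1)] by (intro set_plus_intro span_base imageI)
    then show "s \<in> span S + scale (\<pi> ^ n) ` T" by simp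
  qed
  then show ?thesis unfolding compactoid_in_def using assms(2,3) by blast
qed

lemma compactoid_in_subset:
  "compactoid_in scale \<pi> T S \<Longrightarrow> S' \<subseteq> S \<Longrightarrow> compactoid_in scale \<pi> T S'"
  unfolding compactoid_in_def by (meson order_trans)

lemma compactoid_in_mono:
  assumes "compactoid_in scale \<pi> T S" "T \<subseteq> T'"
  shows "compactoid_in scale \<pi> T' S"
  unfolding compactoid_in_def
proof
  fix n
  obtain F where "finite F" "F \<subseteq> T" "S \<subseteq> span F + scale (\<pi> ^ n) ` T"
    using assms(1) unfolding compactoid_in_def by blast
  moreover have "span F + scale (\<pi> ^ n) ` T \<subseteq> span F + scale (\<pi> ^ n) ` T'"
    using assms(2) by (intro set_plus_mono2 image_mono) auto
  ultimately show "\<exists>F. finite F \<and> F \<subseteq> T' \<and> S \<subseteq> span F + scale (\<pi> ^ n) ` T'"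
    using assms(2) by blast
qed

lemma compactoid_in_Un:
  assumes "compactoid_in scale \<pi> T S1" "compactoid_in scale \<pi> T S2"
  shows "compactoid_in scale \<pi> T (S1 \<union> S2)"
  unfolding compactoid_in_def
proof
  fix n
  obtain F1 F2 where "finite F1" "F1 \<subseteq> T" "S1 \<subseteq> span F1 + scale (\<pi> ^ n) ` T"
    and "finite F2" "F2 \<subseteq> T" "S2 \<subseteq> span F2 + scale (\<pi> ^ n) ` T"
    using assms unfolding compactoid_in_def by meson
  moreover have "span Fi + scale (\<pi> ^ n) ` T \<subseteq> span (F1 \<union> F2) + scale (\<pi> ^ n) ` T"
    if "Fi \<subseteq> F1 \<union> F2" for Fi
    using that by (intro set_plus_mono2 span_mono) auto
  ultimately show "\<exists>F. finite F \<and> F \<subseteq> T \<and> S1 \<union> S2 \<subseteq> span F + scale (\<pi> ^ n) ` T"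
    by (intro exI[of _ "F1 \<union> F2"]) blast
qed

lemma compactoid_in_span:
  assumes "subspace T" "compactoid_in scale \<pi> T S"
  shows "compactoid_in scale \<pi> T (span S)"
  unfolding compactoid_in_def
proof
  fix n
  obtain F where F: "finite F" "F \<subseteq> T" "S \<subseteq> span F + scale (\<pi> ^ n) ` T"
    using assms(2) unfolding compactoid_in_def by blast
  have "span S \<subseteq> span F + scale (\<pi> ^ n) ` T"
    using assms(1) F(3) by (intro span_minimal subspace_set_plus subspace_span subspace_scale_image)
  then show "\<exists>F. finite F \<and> F \<subseteq> T \<and> span S \<subseteq> span F + scale (\<pi> ^ n) ` T"
    using F(1,2) by blast
qed

lemma mem_span_plus_scale_image_of_eq:
  assumes T: "subspace T" and "t \<in> T" "t' \<in> T" "g \<in> span A" "e \<in> span B"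
    and eq: "g + scale a t = e + scale (a * b) t'"
    and D: "{y \<in> T. scale a y \<in> span (A \<union> B)} \<subseteq> span D"
  shows "t \<in> span D + scale b ` T"
proof -
  define y where "y = t - scale b t'"
  have "y \<in> T" unfolding y_def using assms(2,3) by (intro subspace_diff[OF T] subspace_scale[OF T])
  moreover have "scale a y = e - g"
    using eq by (simp add: y_def scale_right_diff_distrib algebra_simps)
  moreover have "e - g \<in> span (A \<union> B)"
    using assms(4,5) span_mono[of A "A \<union> B"] span_mono[of B "A \<union> B"] by (blast intro: span_diff)
  ultimately have "y \<in> span D" using D by auto
  moreover have "t = y + scale b t'" by (simp add: y_def)
  ultimately show ?thesis using assms(3) by (auto intro: set_plus_intro)
qed

end

lemma (in module_hom) compactoid_in_image:
  assumes "compactoid_in s1 \<pi> T S"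
  shows "compactoid_in s2 \<pi> (f ` T) (f ` S)"
  unfolding compactoid_in_def
proof
  fix n
  obtain F where F: "finite F" "F \<subseteq> T" "S \<subseteq> m1.span F + s1 (\<pi> ^ n) ` T"
    using assms unfolding compactoid_in_def by blast
  have "f ` (m1.span F + s1 (\<pi> ^ n) ` T) \<subseteq> m2.span (f ` F) + s2 (\<pi> ^ n) ` f ` T"
    by (auto elim!: set_plus_elim simp: add scale span_image intro!: set_plus_intro imageI)
  then show "\<exists>F'. finite F' \<and> F' \<subseteq> f ` T \<and> f ` S \<subseteq> m2.span F' + s2 (\<pi> ^ n) ` f ` T"
    using F by (intro exI[of _ "f ` F"]) blast
qed

lemma compactoid_in_scale_preimage:
  fixes \<pi> :: "'v::idom" and scale :: "'v \<Rightarrow> 'm::ab_group_add \<Rightarrow> 'm"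
  assumes M: "module scale" and V: "dvr_uniformiser \<pi>" and inj: "inj (scale \<pi>)"
    and T: "module.subspace scale T" and S: "compactoid_in scale \<pi> T S"
  shows "compactoid_in scale \<pi> {x. scale \<pi> x \<in> T} {x. scale \<pi> x \<in> S}"
  unfolding compactoid_in_def
proof
  interpret module scale by (rule M)
  fix n
  define T' where "T' = {x. scale \<pi> x \<in> T}"
  have T': "subspace T'"
    unfolding T'_def using module_hom.subspace_linear_preimage[OF module_hom_scale_self T] .
  have "T \<subseteq> T'" unfolding T'_def using subspace_scale[OF T] by blast
  obtain F where F: "finite F" "S \<subseteq> span F + scale (\<pi> ^ Suc n) ` T"
    using S unfolding compactoid_in_def by blast
  obtain D where D: "finite D" "D \<subseteq> T'" "{y \<in> T'. scale \<pi> y \<in> span F} \<subseteq> span D"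
    using scale_preimage_finitely_generated[OF M V inj T' F(1)] by blast
  have "{x. scale \<pi> x \<in> S} \<subseteq> span D + scale (\<pi> ^ n) ` T'"
  proof
    fix x assume "x \<in> {x. scale \<pi> x \<in> S}"
    then have x: "scale \<pi> x \<in> S" by simp
    then obtain g t where g: "g \<in> span F" "t \<in> T" "scale \<pi> x = g + scale (\<pi> ^ Suc n) t"
      using F(2) by (blast elim: set_plus_elim)
    define y where "y = x - scale (\<pi> ^ n) t"
    have "x \<in> T'" using x compactoid_in_imp_subset[OF T S] unfolding T'_def by blast
    moreover have "scale (\<pi> ^ n) t \<in> T'" using g(2) \<open>T \<subseteq> T'\<close> subspace_scale[OF T'] by blast
    ultimately have "y \<in> T'" unfolding y_def by (rule subspace_diff[OF T'])
    moreover have "scale \<pi> y = g" unfolding y_def using g(3) by (simp add: scale_right_diff_distrib)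
    ultimately have "y \<in> span D" using D(3) g(1) by blast
    moreover have "x = y + scale (\<pi> ^ n) t" unfolding y_def by simp
    ultimately show "x \<in> span D + scale (\<pi> ^ n) ` T'"
      using g(2) \<open>T \<subseteq> T'\<close> by (auto intro: set_plus_intro)
  qed
  then show "\<exists>F. finite F \<and> F \<subseteq> T' \<and> {x. scale \<pi> x \<in> S} \<subseteq> span F + scale (\<pi> ^ n) ` T'"
    using D(1,2) by blast
qed

lemma compactoid_in_of_approximations:
  fixes \<pi> :: "'v::idom" and scale :: "'v \<Rightarrow> 'm::ab_group_add \<Rightarrow> 'm"
  assumes M: "module scale" and V: "dvr_uniformiser \<pi>" and T: "module.subspace scale T"
    and "S \<subseteq> T" and approx: "\<And>n. \<exists>F. finite F \<and> S \<subseteq> module.span scale F + scale (\<pi> ^ n) ` T"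
  shows "compactoid_in scale \<pi> T S"
  unfolding compactoid_in_def
proof
  interpret module scale by (rule M)
  fix n
  obtain F where F: "finite F" "S \<subseteq> span F + scale (\<pi> ^ n) ` T" using approx by blast
  obtain G where G: "finite G" "G \<subseteq> T" "span G = T \<inter> span F"
    using subspace_Int_span_finitely_generated[OF M V T F(1)] by blast
  have "S \<subseteq> span G + scale (\<pi> ^ n) ` T"
  proof
    fix s assume "s \<in> S"
    then obtain g t where g: "g \<in> span F" "t \<in> T" "s = g + scale (\<pi> ^ n) t"
      using F(2) by (blast elim: set_plus_elim)
    have "g = s - scale (\<pi> ^ n) t" using g(3) by simp
    also have "\<dots> \<in> T"
      using \<open>s \<in> S\<close> \<open>S \<subseteq> T\<close> g(2) by (intro subspace_diff[OF T] subspace_scale[OF T]) auto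
    finally have "g \<in> span G" using G(3) g(1) by blast
    then show "s \<in> span G + scale (\<pi> ^ n) ` T" using g(2,3) by (auto intro: set_plus_intro)
  qed
  then show "\<exists>F. finite F \<and> F \<subseteq> T \<and> S \<subseteq> span F + scale (\<pi> ^ n) ` T" using G(1,2) by blast
qed

lemma compactoid_in_compactoid_subspace:
  fixes \<pi> :: "'v::idom" and scale :: "'v \<Rightarrow> 'm::ab_group_add \<Rightarrow> 'm"
  assumes M: "module scale" and V: "dvr_uniformiser \<pi>" and inj: "\<And>c. c \<noteq> 0 \<Longrightarrow> inj (scale c)"
    and T: "module.subspace scale T" and S: "compactoid_in scale \<pi> T S"
  shows "\<exists>T'\<subseteq>T. module.subspace scale T' \<and> compactoid_in scale \<pi> T T' \<and> compactoid_in scale \<pi> T' S"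
proof -
  interpret module scale by (rule M)
  obtain F where F: "\<And>n. finite (F n)" "\<And>n. F n \<subseteq> T" "\<And>n. S \<subseteq> span (F n) + scale (\<pi> ^ n) ` T"
    using S unfolding compactoid_in_def by metis
  have "\<forall>n k. \<exists>D. finite D \<and> D \<subseteq> T \<and>
          {y \<in> T. scale (\<pi> ^ n) y \<in> span (F (2 * n) \<union> F (n + k))} \<subseteq> span D"
    using dvr_uniformiser_nonzero[OF V] F(1)
    by (intro allI scale_preimage_finitely_generated[OF M V inj T]) simp_all
  then obtain D where D: "\<And>n k. finite (D n k)" "\<And>n k. D n k \<subseteq> T"
      "\<And>n k. {y \<in> T. scale (\<pi> ^ n) y \<in> span (F (2 * n) \<union> F (n + k))} \<subseteq> span (D n k)"
    unfolding choice_iff by blast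
  txt \<open>The generators D n k added to F k make the tail \<pi>^n u of a point g + \<pi>^(2n) u of S
    lie in T', which gives the approximations of S modulo \<pi>^n T'.\<close>
  define E where "E k = F k \<union> (\<Union>n<k. D n k)" for k
  have E: "finite (E k)" "E k \<subseteq> T" for k unfolding E_def using F(1,2) D(1,2) by blast+
  define T' where "T' = T \<inter> (\<Inter>k. span (E k) + scale (\<pi> ^ k) ` T)"
  have T': "subspace T'" unfolding T'_def
    by (intro subspace_inter T subspace_Int subspace_set_plus subspace_span subspace_scale_image)
  have T'_approx: "T' \<subseteq> span (E k) + scale (\<pi> ^ k) ` T" for k unfolding T'_def by blast
  then have "compactoid_in scale \<pi> T T'"
    unfolding compactoid_in_def by (intro allI exI[of _ "E _"] conjI E)
  have "S \<subseteq> T'"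
  proof -
    have "span (F k) \<subseteq> span (E k)" for k unfolding E_def by (intro span_mono) blast
    then have "S \<subseteq> span (E k) + scale (\<pi> ^ k) ` T" for k
      using F(3)[of k] set_plus_mono2[OF _ order_refl] by (meson order_trans)
    then show ?thesis unfolding T'_def using compactoid_in_imp_subset[OF T S] by blast
  qed
  have "S \<subseteq> span (F (2 * n)) + scale (\<pi> ^ n) ` T'" for n
  proof
    fix s assume "s \<in> S"
    then obtain g u where g: "g \<in> span (F (2 * n))" "u \<in> T" "s = g + scale (\<pi> ^ (2 * n)) u"
      using F(3) by (blast elim: set_plus_elim)
    define t where "t = scale (\<pi> ^ n) u"
    have s: "s = g + scale (\<pi> ^ n) t" unfolding t_def g(3) by (simp add: mult_2 power_add)
    have "t \<in> span (E k) + scale (\<pi> ^ k) ` T" for k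
    proof (cases "k \<le> n")
      case True
      then have "t = 0 + scale (\<pi> ^ k) (scale (\<pi> ^ (n - k)) u)"
        by (simp add: t_def power_add[symmetric])
      moreover have "scale (\<pi> ^ (n - k)) u \<in> T" using subspace_scale[OF T g(2)] .
      ultimately show ?thesis using span_zero by (metis set_plus_intro imageI)
    next
      case False
      obtain e t' where e: "e \<in> span (F (n + k))" "t' \<in> T" "s = e + scale (\<pi> ^ (n + k)) t'"
        using F(3) \<open>s \<in> S\<close> by (blast elim: set_plus_elim)
      have "g + scale (\<pi> ^ n) t = e + scale (\<pi> ^ n * \<pi> ^ k) t'"
        using s e(3) by (simp add: power_add)
      then have "t \<in> span (D n k) + scale (\<pi> ^ k) ` T"
        using mem_span_plus_scale_image_of_eq[OF T _ e(2) g(1) e(1) _ D(3)]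
          subspace_scale[OF T g(2)] t_def by blast
      moreover have "span (D n k) \<subseteq> span (E k)"
        using False unfolding E_def by (intro span_mono) auto
      ultimately show ?thesis using set_plus_mono2[of "span (D n k)" "span (E k)"] by blast
    qed
    then have "t \<in> T'" unfolding T'_def using subspace_scale[OF T g(2)] t_def by blast
    then show "s \<in> span (F (2 * n)) + scale (\<pi> ^ n) ` T'"
      using s g(1) by (auto intro: set_plus_intro)
  qed
  then have "compactoid_in scale \<pi> T' S"
    using compactoid_in_of_approximations[OF M V T' \<open>S \<subseteq> T'\<close>] F(1) by blast
  moreover have "T' \<subseteq> T" unfolding T'_def by blast
  ultimately show ?thesis using T' \<open>compactoid_in scale \<pi> T T'\<close> by blast
qed

section \<open>The compactoid bornology\<close>

lemma submodule_eq_subspace: "module scale \<Longrightarrow> submodule scale = module.subspace scale"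
  by (auto simp: fun_eq_iff submodule_def module.subspace_def)

lemma gen_submodule_eq_span: "module scale \<Longrightarrow> gen_submodule scale = module.span scale"
  by (auto simp: fun_eq_iff gen_submodule_def module.span_explicit)

lemma set_plus_Collect: "{x + y | x y. x \<in> A \<and> y \<in> B} = A + B"
  unfolding set_plus_def by blast

lemma compactoid_iff:
  assumes "module scale"
  shows "compactoid scale \<pi> B S \<longleftrightarrow>
           (\<exists>T\<in>B. module.subspace scale T \<and> S \<subseteq> T \<and> compactoid_in scale \<pi> T S)"
  unfolding compactoid_def compactoid_in_def set_plus_Collect
    submodule_eq_subspace[OF assms] gen_submodule_eq_span[OF assms]
  by (simp add: Bex_def)

lemma compactoid_imp_bounded: "bornology B \<Longrightarrow> compactoid scale \<pi> B S \<Longrightarrow> S \<in> B"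
  unfolding bornology_def compactoid_def by blast

lemma born_module_iff:
  "born_module scale B \<longleftrightarrow> module scale \<and> bornology B \<and>
     (\<forall>S\<in>B. \<exists>T\<in>B. S \<subseteq> T \<and> module.subspace scale T)"
proof (cases "module scale")
  case True
  show ?thesis unfolding born_module_def submodule_eq_subspace[OF True] by simp
qed (simp add: born_module_def)

lemma torsionfree_born_inj_scale:
  assumes "module scale" and "torsionfree_born scale \<pi> B" and "c \<noteq> 0"
  shows "inj (scale c)"
proof (rule injI)
  fix x y assume "scale c x = scale c y"
  then have "scale c (x - y) = 0"
    using assms(1) by (simp add: module.scale_right_diff_distrib)
  then have "x - y = 0" using assms(2,3) unfolding torsionfree_born_def by blast
  then show "x = y" by simp
qed

lemma born_module_compactoid_born:
  assumes "born_module scale B"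
  shows "born_module scale (compactoid_born scale \<pi> B)"
proof -
  have M: "module scale" and B: "bornology B"
    and hull: "\<And>S. S \<in> B \<Longrightarrow> \<exists>T\<in>B. S \<subseteq> T \<and> module.subspace scale T"
    using assms unfolding born_module_iff by auto
  interpret module scale by (rule M)
  note compactoid = compactoid_iff[OF M]
  have finite: "compactoid scale \<pi> B S" if "finite S" for S
  proof -
    have "S \<in> B" using B that unfolding bornology_def by blast
    then obtain T where "T \<in> B" "S \<subseteq> T" "subspace T" using hull by blast
    then show ?thesis unfolding compactoid using compactoid_in_finite that by blast
  qed
  have Un: "compactoid scale \<pi> B (S1 \<union> S2)"
    if S: "compactoid scale \<pi> B S1" "compactoid scale \<pi> B S2" for S1 S2
  proof -
    obtain T1 T2 where T1: "T1 \<in> B" "S1 \<subseteq> T1" "compactoid_in scale \<pi> T1 S1"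
      and T2: "T2 \<in> B" "S2 \<subseteq> T2" "compactoid_in scale \<pi> T2 S2"
      using S unfolding compactoid by blast
    have "T1 \<union> T2 \<in> B" using B T1(1) T2(1) unfolding bornology_def by blast
    then obtain T where T: "T \<in> B" "T1 \<union> T2 \<subseteq> T" "subspace T" using hull by blast
    then have "compactoid_in scale \<pi> T (S1 \<union> S2)"
      using T1(3) T2(3) by (intro compactoid_in_Un) (auto intro: compactoid_in_mono)
    then show ?thesis unfolding compactoid using T T1(2) T2(2) by blast
  qed
  have subset: "compactoid scale \<pi> B S'" if "compactoid scale \<pi> B S" "S' \<subseteq> S" for S S'
    using that compactoid_in_subset unfolding compactoid by blast
  have span: "compactoid scale \<pi> B (span S)" if S: "compactoid scale \<pi> B S" for S
  proof -
    obtain T where "T \<in> B" "subspace T" "S \<subseteq> T" "compactoid_in scale \<pi> T S"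
      using S unfolding compactoid by blast
    then show ?thesis unfolding compactoid using compactoid_in_span span_minimal by blast
  qed
  have "bornology (compactoid_born scale \<pi> B)"
    unfolding bornology_def compactoid_born_def mem_Collect_eq
    by (intro conjI allI impI; blast intro: finite Un subset)
  moreover have "\<exists>T\<in>compactoid_born scale \<pi> B. S \<subseteq> T \<and> subspace T"
    if "S \<in> compactoid_born scale \<pi> B" for S
    using that span span_superset subspace_span unfolding compactoid_born_def by blast
  ultimately show ?thesis unfolding born_module_iff using M by blast
qed

lemma torsionfree_born_compactoid_born:
  fixes \<pi> :: "'v::idom" and scale :: "'v \<Rightarrow> 'm::ab_group_add \<Rightarrow> 'm"
  assumes N: "born_module scale B" "torsionfree_born scale \<pi> B" and V: "dvr_uniformiser \<pi>"
  shows "torsionfree_born scale \<pi> (compactoid_born scale \<pi> B)"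
proof -
  have M: "module scale" using N(1) unfolding born_module_iff by blast
  interpret module scale by (rule M)
  have inj: "inj (scale \<pi>)"
    using torsionfree_born_inj_scale[OF M N(2) dvr_uniformiser_nonzero[OF V]] .
  have "compactoid scale \<pi> B {x. scale \<pi> x \<in> S}" if S: "compactoid scale \<pi> B S" for S
  proof -
    obtain T where T: "T \<in> B" "subspace T" "compactoid_in scale \<pi> T S"
      using S unfolding compactoid_iff[OF M] by blast
    have "{x. scale \<pi> x \<in> T} \<in> B" using N(2) T(1) unfolding torsionfree_born_def by blast
    moreover have "subspace {x. scale \<pi> x \<in> T}"
      using module_hom.subspace_linear_preimage[OF module_hom_scale_self T(2)] .
    moreover have "{x. scale \<pi> x \<in> S} \<subseteq> {x. scale \<pi> x \<in> T}"
      using compactoid_in_imp_subset[OF T(2,3)] by blast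
    ultimately show ?thesis unfolding compactoid_iff[OF M]
      using compactoid_in_scale_preimage[OF M V inj T(2,3)] by blast
  qed
  then show ?thesis using N(2) unfolding torsionfree_born_def compactoid_born_def by blast
qed

lemma nuclear_compactoid_born:
  fixes \<pi> :: "'v::idom" and scale :: "'v \<Rightarrow> 'm::ab_group_add \<Rightarrow> 'm"
  assumes N: "born_module scale B" "torsionfree_born scale \<pi> B" and V: "dvr_uniformiser \<pi>"
  shows "nuclear scale \<pi> (compactoid_born scale \<pi> B)"
  unfolding nuclear_def
proof
  have M: "module scale" using N(1) unfolding born_module_iff by blast
  have inj: "inj (scale c)" if "c \<noteq> 0" for c using torsionfree_born_inj_scale[OF M N(2) that] .
  fix S assume "S \<in> compactoid_born scale \<pi> B"
  then obtain T where T: "T \<in> B" "module.subspace scale T" "compactoid_in scale \<pi> T S"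
    unfolding compactoid_born_def compactoid_iff[OF M] by blast
  then obtain T' where T': "T' \<subseteq> T" "module.subspace scale T'"
      "compactoid_in scale \<pi> T T'" "compactoid_in scale \<pi> T' S"
    using compactoid_in_compactoid_subspace[OF M V inj] by blast
  have "T' \<in> compactoid_born scale \<pi> B"
    unfolding compactoid_born_def compactoid_iff[OF M] using T T' by blast
  then show "compactoid scale \<pi> (compactoid_born scale \<pi> B) S"
    unfolding compactoid_iff[OF M] using T'(2,4) module.compactoid_in_imp_subset[OF M] by blast
qed

lemma bounded_map_compactoid_born_iff:
  assumes "bornology BN" and nuclear: "nuclear scaleM \<pi> BM" and f: "module_hom scaleM scaleN f"
  shows "bounded_map BM BN f \<longleftrightarrow> bounded_map BM (compactoid_born scaleN \<pi> BN) f"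
proof
  interpret f: module_hom scaleM scaleN f by (rule f)
  assume bounded: "bounded_map BM BN f"
  show "bounded_map BM (compactoid_born scaleN \<pi> BN) f"
    unfolding bounded_map_def compactoid_born_def
  proof (intro ballI CollectI)
    fix S assume "S \<in> BM"
    then obtain T where "T \<in> BM" "f.m1.subspace T" "S \<subseteq> T" "compactoid_in scaleM \<pi> T S"
      using nuclear unfolding nuclear_def compactoid_iff[OF f.m1.module_axioms] by blast
    then show "compactoid scaleN \<pi> BN (f ` S)"
      unfolding compactoid_iff[OF f.m2.module_axioms]
      using bounded f.subspace_image f.compactoid_in_image unfolding bounded_map_def by blast
  qed
next
  assume "bounded_map BM (compactoid_born scaleN \<pi> BN) f"
  then show "bounded_map BM BN f"
    using compactoid_imp_bounded[OF \<open>bornology BN\<close>]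
    unfolding bounded_map_def compactoid_born_def by blast
qed

theorem lemma4p3:
  fixes \<pi> :: "'v::idom"
    and scaleN :: "'v \<Rightarrow> 'n::ab_group_add \<Rightarrow> 'n" and BN :: "'n set set"
  assumes V: "complete_dvr \<pi>"
    and N: "born_module scaleN BN" "torsionfree_born scaleN \<pi> BN"
  shows "born_module scaleN (compactoid_born scaleN \<pi> BN)
       \<and> torsionfree_born scaleN \<pi> (compactoid_born scaleN \<pi> BN)
       \<and> nuclear scaleN \<pi> (compactoid_born scaleN \<pi> BN)
       \<and> (\<forall>(scaleM :: 'v \<Rightarrow> 'm::ab_group_add \<Rightarrow> 'm) BM (f :: 'm \<Rightarrow> 'n).
            born_module scaleM BM \<longrightarrow> torsionfree_born scaleM \<pi> BM \<longrightarrow> nuclear scaleM \<pi> BM \<longrightarrow>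
            module_hom scaleM scaleN f \<longrightarrow>
            (bounded_map BM BN f \<longleftrightarrow> bounded_map BM (compactoid_born scaleN \<pi> BN) f))"
proof -
  have V': "dvr_uniformiser \<pi>" using V unfolding complete_dvr_def by blast
  have "bornology BN" using N(1) unfolding born_module_def by blast
  then show ?thesis
    using born_module_compactoid_born[OF N(1)] torsionfree_born_compactoid_born[OF N V']
      nuclear_compactoid_born[OF N V'] bounded_map_compactoid_born_iff
    by blast
qed

end
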